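(* Let $A,B\subseteq\mathbb{N}$ with $A\in\mathcal{D}$ and $A\cap B=\emptyset$. Then $\underline{\underline{d}}(A\cup B)=d(A)+\underline{\underline{d}}(B)$.
   Context: $\mathbb{N}=\{1,2,3,\dots\}$. For $A\subseteq\mathbb{N}$ let $A(n)=|A\cap[1,n]|$. Let $\mathcal{D}$ be the collection of all $A\subseteq\mathbb{N}$ for which the asymptotic density $d(A)=\lim_{n\to\infty}\frac{A(n)}{n}$ exists. Define $\underline{\underline{d}}(A)=\sup\{d(B);\ B\subseteq A,\ B\in\mathcal{D}\}$. *)

theory Defs
  imports "HOL-Analysis.Analysis"
begin

text \<open>Subsets of the positive integers are modelled as sets of naturals contained in
  the set of positive naturals.\<close>

definition counting :: "nat set \<Rightarrow> nat \<Rightarrow> nat" where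
  "counting A n = card (A \<inter> {1..n})"

definition has_density :: "nat set \<Rightarrow> real \<Rightarrow> bool" where
  "has_density A \<delta> \<longleftrightarrow> ((\<lambda>n. real (counting A n) / real n) \<longlonglongrightarrow> \<delta>)"

definition DD :: "nat set set" where
  "DD = {A. A \<subseteq> {1..} \<and> (\<exists>\<delta>. has_density A \<delta>)}"

definition asymp_density :: "nat set \<Rightarrow> real" where
  "asymp_density A = lim (\<lambda>n. real (counting A n) / real n)"

definition inner_density :: "nat set \<Rightarrow> real" where
  "inner_density A = Sup {asymp_density B | B. B \<subseteq> A \<and> B \<in> DD}"

end

theory Submission
  imports Defs
begin

text \<open>If \<open>C \<subseteq> A \<union> B\<close> has density \<open>c\<close>, the part \<open>C - A \<subseteq> B\<close> gains at least as many
  elements as \<open>C\<close> minus \<open>A\<close> on every interval, so it grows at rate \<open>c - d(A)\<close> up to an error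
  of order \<open>o(n)\<close>. A greedy selection from \<open>C - A\<close>, which takes the next element whenever
  the count so far stays below \<open>(c - d(A)) n\<close>, then yields a subset of \<open>B\<close> of density
  exactly \<open>c - d(A)\<close>. Hence the inner density of \<open>A \<union> B\<close> is at most \<open>d(A)\<close> plus that of
  \<open>B\<close>; the reverse inequality holds since \<open>A \<union> C'\<close> has density \<open>d(A) + d(C')\<close> for every
  \<open>C' \<subseteq> B\<close> with a density.\<close>

lemma counting_0 [simp]: "counting X 0 = 0"
  by (simp add: counting_def)

lemma counting_Suc: "counting X (Suc n) = counting X n + (if Suc n \<in> X then 1 else 0)"
proof -
  have "X \<inter> {1..Suc n} = (if Suc n \<in> X then insert (Suc n) (X \<inter> {1..n}) else X \<inter> {1..n})"
    by (auto simp: le_Suc_eq)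
  then show ?thesis by (simp add: counting_def)
qed

lemma counting_le: "counting X n \<le> n"
  using card_mono[of "{1..n}" "X \<inter> {1..n}"] by (auto simp: counting_def)

lemma counting_Un_disjoint:
  assumes "X \<inter> Y = {}"
  shows "counting (X \<union> Y) n = counting X n + counting Y n"
proof -
  have "(X \<union> Y) \<inter> {1..n} = (X \<inter> {1..n}) \<union> (Y \<inter> {1..n})" by auto
  then show ?thesis
    using assms by (simp add: counting_def card_Un_disjoint disjoint_iff)
qed

lemma counting_diff_increment_ge:
  assumes "m \<le> n"
  shows "real (counting C n) - real (counting A n) - (real (counting C m) - real (counting A m))
    \<le> real (counting (C - A) n) - real (counting (C - A) m)"
proof -
  let ?f = "\<lambda>n. real (counting (C - A) n) + real (counting A n) - real (counting C n)"
  have "?f n \<le> ?f (Suc n)" for n by (auto simp: counting_Suc)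
  then have "?f m \<le> ?f n" using lift_Suc_mono_le[of ?f] assms by blast
  then show ?thesis by simp
qed

lemma has_density_bounds:
  assumes "has_density X d"
  shows "0 \<le> d" "d \<le> 1"
proof -
  have lim: "(\<lambda>n. real (counting X n) / real n) \<longlonglongrightarrow> d"
    using assms by (simp add: has_density_def)
  show "0 \<le> d" by (rule LIMSEQ_le_const[OF lim]) simp
  have "real (counting X n) / real n \<le> 1" for n
    using counting_le[of X n] by (cases "n = 0") (auto simp: divide_le_eq_1)
  then show "d \<le> 1" by (intro LIMSEQ_le_const2[OF lim]) simp
qed

lemma asymp_density_eqI: "has_density X d \<Longrightarrow> asymp_density X = d"
  by (simp add: asymp_density_def has_density_def limI)

lemma has_density_asymp_density: "X \<in> DD \<Longrightarrow> has_density X (asymp_density X)"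
  unfolding DD_def using asymp_density_eqI by auto

lemma has_density_Un_disjoint:
  assumes "X \<inter> Y = {}" "has_density X a" "has_density Y b"
  shows "has_density (X \<union> Y) (a + b)"
proof -
  have "(\<lambda>n. real (counting X n) / real n + real (counting Y n) / real n) \<longlonglongrightarrow> a + b"
    using assms(2,3) by (intro tendsto_add) (auto simp: has_density_def)
  then show ?thesis
    by (simp add: has_density_def counting_Un_disjoint[OF assms(1)] add_divide_distrib)
qed

lemma has_density_empty: "has_density {} 0"
  by (simp add: has_density_def counting_def)

lemma sublinear_uniform_bound:
  fixes r :: "nat \<Rightarrow> real"
  assumes "(\<lambda>k. r k / real k) \<longlonglongrightarrow> 0" and "0 < e"
  obtains K where "\<And>m n. m \<le> n \<Longrightarrow> \<bar>r m\<bar> \<le> K + e * real n"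
proof -
  obtain N where N: "\<And>k. k \<ge> N \<Longrightarrow> \<bar>r k / real k\<bar> < e"
    using LIMSEQ_D[OF assms] by auto
  define K where "K = (\<Sum>m\<le>N. \<bar>r m\<bar>)"
  have "\<bar>r m\<bar> \<le> K + e * real n" if "m \<le> n" for m n
  proof (cases "m \<le> N")
    case True
    then have "\<bar>r m\<bar> \<le> K" unfolding K_def by (intro member_le_sum) auto
    then show ?thesis using assms(2) by (simp add: add_increasing2)
  next
    case False
    then have "\<bar>r m\<bar> < e * real m"
      using N[of m] by (simp add: abs_divide divide_less_eq)
    also have "\<dots> \<le> e * real n" using that assms(2) by simp
    finally show ?thesis by (simp add: K_def add_increasing sum_nonneg)
  qed
  then show ?thesis by (rule that)
qed

lemma running_max_sublinear:
  fixes r :: "nat \<Rightarrow> real"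
  assumes "(\<lambda>k. r k / real k) \<longlonglongrightarrow> 0"
  shows "(\<lambda>n. Max ((\<lambda>m. \<bar>r m\<bar>) ` {..n}) / real n) \<longlonglongrightarrow> 0"
proof (rule LIMSEQ_I)
  fix e :: real assume "0 < e"
  then obtain K where K: "\<And>m n. m \<le> n \<Longrightarrow> \<bar>r m\<bar> \<le> K + e / 2 * real n"
    using sublinear_uniform_bound[OF assms, of "e / 2"] by auto
  have "0 \<le> K" using K[of 0 0] by simp
  obtain n0 :: nat where n0: "2 * K / e < real n0" using reals_Archimedean2 by blast
  show "\<exists>no. \<forall>n\<ge>no. norm (Max ((\<lambda>m. \<bar>r m\<bar>) ` {..n}) / real n - 0) < e"
  proof (intro exI allI impI)
    fix n assume "Suc n0 \<le> n"
    then have "e * real n0 < e * real n" using \<open>0 < e\<close> by simp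
    moreover have "2 * K < e * real n0" using n0 \<open>0 < e\<close> by (simp add: pos_divide_less_eq mult.commute)
    ultimately have n: "0 < real n" "2 * K < e * real n" using \<open>Suc n0 \<le> n\<close> by auto
    have "Max ((\<lambda>m. \<bar>r m\<bar>) ` {..n}) \<le> K + e / 2 * real n" using K by simp
    also have "\<dots> < e * real n" using n by simp
    finally have "Max ((\<lambda>m. \<bar>r m\<bar>) ` {..n}) < e * real n" .
    moreover have "0 \<le> Max ((\<lambda>m. \<bar>r m\<bar>) ` {..n})" by (auto simp: Max_ge_iff)
    ultimately show "norm (Max ((\<lambda>m. \<bar>r m\<bar>) ` {..n}) / real n - 0) < e"
      using n by (simp add: divide_less_eq)
  qed
qed

fun greedy_count :: "nat set \<Rightarrow> real \<Rightarrow> nat \<Rightarrow> nat" where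
  "greedy_count D b 0 = 0"
| "greedy_count D b (Suc k) =
    (if Suc k \<in> D \<and> real (greedy_count D b k) + 1 \<le> b * real (Suc k)
     then Suc (greedy_count D b k) else greedy_count D b k)"

definition greedy_subset :: "nat set \<Rightarrow> real \<Rightarrow> nat set" where
  "greedy_subset D b = {k. 1 \<le> k \<and> k \<in> D \<and> real (greedy_count D b (k - 1)) + 1 \<le> b * real k}"

lemma greedy_subset_subset: "greedy_subset D b \<subseteq> D \<inter> {1..}"
  by (auto simp: greedy_subset_def)

lemma counting_greedy_subset: "counting (greedy_subset D b) n = greedy_count D b n"
  by (induction n) (simp_all add: counting_Suc greedy_subset_def)

lemma greedy_count_le: "0 \<le> b \<Longrightarrow> real (greedy_count D b n) \<le> b * real n"
proof (induction n)
  case (Suc n)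
  have "b * real n \<le> b * real (Suc n)" using Suc.prems by (simp add: mult_left_mono)
  then show ?case using Suc by auto
qed simp

text \<open>The witness \<open>m\<close> is the last time the greedy count was blocked by the rate bound;
  after \<open>m\<close> every element of \<open>D\<close> was selected.\<close>

lemma greedy_count_ge:
  "\<exists>m\<le>n. b * real m - 1 + real (counting D n) - real (counting D m) \<le> real (greedy_count D b n)"
proof (induction n)
  case (Suc n)
  then obtain m where m: "m \<le> n"
    "b * real m - 1 + real (counting D n) - real (counting D m) \<le> real (greedy_count D b n)"
    by blast
  show ?case
  proof (cases "Suc n \<in> D \<and> b * real (Suc n) < real (greedy_count D b n) + 1")
    case True
    then show ?thesis by (intro exI[of _ "Suc n"]) auto
  next
    case False
    then show ?thesis using m by (intro exI[of _ m]) (auto simp: counting_Suc)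
  qed
qed simp

lemma has_density_greedy_subset:
  fixes g :: "nat \<Rightarrow> real"
  assumes "0 \<le> b" and g: "(\<lambda>n. g n / real n) \<longlonglongrightarrow> b"
    and increments: "\<And>m n. m \<le> n \<Longrightarrow> g n - g m \<le> real (counting D n) - real (counting D m)"
  shows "has_density (greedy_subset D b) b"
proof -
  define r where "r k = g k - b * real k" for k
  define M where "M n = Max ((\<lambda>m. \<bar>r m\<bar>) ` {..n})" for n
  have "(\<lambda>k. g k / real k - b) \<longlonglongrightarrow> 0"
    using tendsto_diff[OF g tendsto_const[of b]] by simp
  moreover have "\<forall>\<^sub>F k in sequentially. g k / real k - b = r k / real k"
    using eventually_gt_at_top[of 0] by eventually_elim (simp add: r_def field_simps)
  ultimately have "(\<lambda>k. r k / real k) \<longlonglongrightarrow> 0" by (rule Lim_transform_eventually)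
  then have "(\<lambda>n. M n / real n) \<longlonglongrightarrow> 0" unfolding M_def by (rule running_max_sublinear)
  then have upper: "(\<lambda>n. (1 + 2 * M n) / real n) \<longlonglongrightarrow> 0"
    using tendsto_add[OF lim_inverse_n' tendsto_mult_left[of "\<lambda>n. M n / real n" 0 sequentially 2]]
    by (simp add: add_divide_distrib)
  have gap: "0 \<le> b * real n - real (greedy_count D b n)"
    and gap_bound: "b * real n - real (greedy_count D b n) \<le> 1 + 2 * M n" for n
  proof -
    show "0 \<le> b * real n - real (greedy_count D b n)" using greedy_count_le[OF assms(1)] by simp
    obtain m where "m \<le> n"
      and m: "b * real m - 1 + real (counting D n) - real (counting D m) \<le> real (greedy_count D b n)"
      using greedy_count_ge by blast
    moreover have "\<bar>r m\<bar> \<le> M n" "\<bar>r n\<bar> \<le> M n" using \<open>m \<le> n\<close> by (auto simp: M_def)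
    ultimately show "b * real n - real (greedy_count D b n) \<le> 1 + 2 * M n"
      using increments[OF \<open>m \<le> n\<close>] by (simp add: r_def)
  qed
  have "(\<lambda>n. (b * real n - real (greedy_count D b n)) / real n) \<longlonglongrightarrow> 0"
    using gap gap_bound
    by (intro tendsto_sandwich[OF _ _ tendsto_const upper] always_eventually allI)
       (simp_all add: divide_right_mono)
  then have "(\<lambda>n. b - (b * real n - real (greedy_count D b n)) / real n) \<longlonglongrightarrow> b"
    using tendsto_diff[OF tendsto_const[of b]] by fastforce
  moreover have "\<forall>\<^sub>F n in sequentially.
      b - (b * real n - real (greedy_count D b n)) / real n = real (greedy_count D b n) / real n"
    using eventually_gt_at_top[of 0] by eventually_elim (simp add: field_simps)
  ultimately show ?thesis
    unfolding has_density_def counting_greedy_subset by (rule Lim_transform_eventually)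
qed

lemma has_density_subset_diff:
  assumes C: "has_density C c" and A: "has_density A a" and "a \<le> c"
  obtains F where "F \<subseteq> (C - A) \<inter> {1..}" "has_density F (c - a)"
proof
  show "greedy_subset (C - A) (c - a) \<subseteq> (C - A) \<inter> {1..}" by (rule greedy_subset_subset)
  have "(\<lambda>n. real (counting C n) / real n - real (counting A n) / real n) \<longlonglongrightarrow> c - a"
    using C A by (intro tendsto_diff) (auto simp: has_density_def)
  then show "has_density (greedy_subset (C - A) (c - a)) (c - a)"
    using \<open>a \<le> c\<close> counting_diff_increment_ge
    by (intro has_density_greedy_subset[where g = "\<lambda>n. real (counting C n) - real (counting A n)"])
       (simp_all add: diff_divide_distrib)
qed

lemma bdd_above_densities: "bdd_above {asymp_density B | B. B \<subseteq> X \<and> B \<in> DD}"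
  by (rule bdd_aboveI[of _ 1]) (auto dest: has_density_asymp_density has_density_bounds)

lemma inner_density_ge: "B \<subseteq> X \<Longrightarrow> has_density B d \<Longrightarrow> B \<subseteq> {1..} \<Longrightarrow> d \<le> inner_density X"
  unfolding inner_density_def
  by (rule cSup_upper[OF _ bdd_above_densities]) (auto simp: DD_def asymp_density_eqI intro!: exI[of _ B])

lemma inner_density_nonneg: "0 \<le> inner_density X"
  using inner_density_ge[OF _ has_density_empty] by simp

lemma inner_density_le:
  assumes "\<And>B d. B \<subseteq> X \<Longrightarrow> has_density B d \<Longrightarrow> B \<subseteq> {1..} \<Longrightarrow> d \<le> t"
  shows "inner_density X \<le> t"
  unfolding inner_density_def
proof (rule cSup_least)
  show "{asymp_density B | B. B \<subseteq> X \<and> B \<in> DD} \<noteq> {}"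
    using has_density_empty by (auto simp: DD_def)
qed (use assms has_density_asymp_density in \<open>auto simp: DD_def\<close>)

theorem lemma3p9:
  fixes A B :: "nat set"
  assumes "A \<subseteq> {1..}" and "B \<subseteq> {1..}"
    and "A \<in> DD" and "A \<inter> B = {}"
  shows "inner_density (A \<union> B) = asymp_density A + inner_density B"
proof (rule antisym)
  have A: "has_density A (asymp_density A)" using assms(3) by (rule has_density_asymp_density)
  show "inner_density (A \<union> B) \<le> asymp_density A + inner_density B"
  proof (rule inner_density_le)
    fix C c assume "C \<subseteq> A \<union> B" "has_density C c"
    show "c \<le> asymp_density A + inner_density B"
    proof (cases "asymp_density A \<le> c")
      case True
      then obtain F where "F \<subseteq> (C - A) \<inter> {1..}" "has_density F (c - asymp_density A)"
        using has_density_subset_diff[OF \<open>has_density C c\<close> A] by blast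
      then have "c - asymp_density A \<le> inner_density B"
        using \<open>C \<subseteq> A \<union> B\<close> by (intro inner_density_ge) auto
      then show ?thesis by simp
    qed (use inner_density_nonneg[of B] in simp)
  qed
  have "inner_density B \<le> inner_density (A \<union> B) - asymp_density A"
  proof (rule inner_density_le)
    fix C c assume "C \<subseteq> B" "has_density C c" "C \<subseteq> {1..}"
    then have "has_density (A \<union> C) (asymp_density A + c)"
      using assms(4) by (intro has_density_Un_disjoint[OF _ A]) auto
    moreover have "A \<union> C \<subseteq> A \<union> B" "A \<union> C \<subseteq> {1..}" using \<open>C \<subseteq> B\<close> \<open>C \<subseteq> {1..}\<close> assms(1) by auto
    ultimately have "asymp_density A + c \<le> inner_density (A \<union> B)" by (intro inner_density_ge)
    then show "c \<le> inner_density (A \<union> B) - asymp_density A" by simp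
  qed
  then show "asymp_density A + inner_density B \<le> inner_density (A \<union> B)" by simp
qed

end
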